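(* Let $A$ be a finite-dimensional irreducible ordered linear space. Then every order-automorphism $\chi$ of $A$ lies on an extremal ray of the cone $\mathcal{L}_{+}(A,A)$ of positive linear maps from $A$ to $A$; that is, whenever $\chi = \psi + \mu$ with $\psi,\mu \in \mathcal{L}_{+}(A,A)$, both $\psi$ and $\mu$ are non-negative scalar multiples of $\chi$.
   Context: An ordered linear space is a finite-dimensional real vector space $V$ with a positive cone $V_+$ that is a convex cone which is pointed ($V_+\cap -V_+=\{0\}$), closed and generating ($V=V_+-V_+$); $x\le y$ iff $y-x\in V_+$. A linear map $\phi:V\to W$ is positive if $\phi(V_+)\subseteq W_+$; $\mathcal{L}_+(V,W)$ denotes the cone of positive linear maps. An order-automorphism of $V$ is a linear bijection $\phi:V\to V$ with $\phi(x)\ge 0$ iff $x\ge 0$. The ordered direct sum of ordered linear spaces $V_1,V_2$ is $V_1\oplus V_2$ with positive cone $\{x+y: x\in (V_1)_+, y\in (V_2)_+\}$. $V$ is irreducible if it admits no decomposition as an ordered direct sum of two nonzero ordered subspaces. *)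

theory Defs
  imports "HOL-Analysis.Analysis"
begin

definition ordered_linear_space :: "'a::euclidean_space set \<Rightarrow> bool" where
  "ordered_linear_space P \<longleftrightarrow>
     convex_cone P \<and> P \<inter> uminus ` P = {0} \<and> closed P \<and>
     {x - y | x y. x \<in> P \<and> y \<in> P} = UNIV"

definition ordered_direct_sum_decomp ::
  "'a::euclidean_space set \<Rightarrow> 'a set \<Rightarrow> 'a set \<Rightarrow> bool" where
  "ordered_direct_sum_decomp P V1 V2 \<longleftrightarrow>
     subspace V1 \<and> subspace V2 \<and> V1 \<inter> V2 = {0} \<and>
     {x + y | x y. x \<in> V1 \<and> y \<in> V2} = UNIV \<and>
     P = {x + y | x y. x \<in> P \<inter> V1 \<and> y \<in> P \<inter> V2}"

definition irreducible_ols :: "'a::euclidean_space set \<Rightarrow> bool" where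
  "irreducible_ols P \<longleftrightarrow>
     \<not> (\<exists>V1 V2. V1 \<noteq> {0} \<and> V2 \<noteq> {0} \<and> ordered_direct_sum_decomp P V1 V2)"

definition positive_map :: "'a::euclidean_space set \<Rightarrow> ('a \<Rightarrow> 'a) \<Rightarrow> bool" where
  "positive_map P f \<longleftrightarrow> linear f \<and> f ` P \<subseteq> P"

definition order_automorphism :: "'a::euclidean_space set \<Rightarrow> ('a \<Rightarrow> 'a) \<Rightarrow> bool" where
  "order_automorphism P f \<longleftrightarrow> linear f \<and> bij f \<and> (\<forall>x. f x \<in> P \<longleftrightarrow> x \<in> P)"

end

theory Submission
  imports Defs
begin

text \<open>Composing with \<open>\<chi>\<^sup>-\<^sup>1\<close> reduces the claim to a decomposition
\<open>id = \<psi> + \<mu>\<close> of the identity into positive maps. A closed pointed cone is the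
convex cone hull of its extreme vectors (Krein--Milman applied to a compact base of the
cone), and for an extreme vector \<open>e\<close> the splitting \<open>e = \<psi> e + \<mu> e\<close> forces
\<open>\<psi> e\<close> onto the ray of \<open>e\<close>. So the extreme vectors are eigenvectors of \<open>\<psi>\<close>; separating those with a
given eigenvalue from the others splits the cone into an ordered direct sum, because
eigenvectors for distinct eigenvalues span subspaces meeting only in \<open>0\<close>.
Irreducibility leaves a single eigenvalue, i.e. \<open>\<psi>\<close> is a scalar.\<close>

definition extreme_vector :: "'a::real_vector set \<Rightarrow> 'a \<Rightarrow> bool" where
  "extreme_vector P e \<longleftrightarrow>
     e \<in> P \<and> e \<noteq> 0 \<and> (\<forall>y\<in>P. \<forall>z\<in>P. y + z = e \<longrightarrow> (\<exists>c. y = c *\<^sub>R e))"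

lemma pointed_cone_eq_0:
  fixes P :: "'a::real_vector set"
  assumes "P \<inter> uminus ` P = {0}" "x \<in> P" "- x \<in> P"
  shows "x = 0"
proof -
  have "x \<in> uminus ` P" using assms(3) by (rule rev_image_eqI) simp
  then show ?thesis using assms(1,2) by blast
qed

lemma convex_cone_sum:
  assumes "convex_cone P" "finite S" "\<And>x. x \<in> S \<Longrightarrow> g x \<in> P"
  shows "sum g S \<in> P"
  using assms(2,3)
proof (induction S rule: finite_induct)
  case empty then show ?case using convex_cone_contains_0[OF assms(1)] by simp
next
  case (insert x F) then show ?case using convex_cone_add[OF assms(1)] by simp
qed

lemma pointed_cone_zero_notin_convex_hull:
  fixes P :: "'a::real_vector set"
  assumes cc: "convex_cone P" and pt: "P \<inter> uminus ` P = {0}" and S: "S \<subseteq> P - {0}"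
  shows "0 \<notin> convex hull S"
proof
  assume "0 \<in> convex hull S"
  then obtain T u where T: "finite T" "T \<subseteq> S" "\<forall>x\<in>T. 0 \<le> u x"
      "sum u T = 1" "(\<Sum>v\<in>T. u v *\<^sub>R v) = 0"
    unfolding convex_hull_explicit by blast
  obtain x0 where x0: "x0 \<in> T" "u x0 > 0"
    using T(3,4) by (metis less_eq_real_def sum.neutral zero_neq_one)
  have x0P: "u x0 *\<^sub>R x0 \<in> P"
    using T(2,3) S x0 by (auto intro: convex_cone_scaleR[OF cc])
  have rest: "(\<Sum>v\<in>T-{x0}. u v *\<^sub>R v) \<in> P"
    using T S by (intro convex_cone_sum[OF cc]) (auto intro: convex_cone_scaleR[OF cc])
  have "u x0 *\<^sub>R x0 + (\<Sum>v\<in>T-{x0}. u v *\<^sub>R v) = 0"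
    using T(1,5) x0(1) by (simp add: sum.remove)
  then have "- (u x0 *\<^sub>R x0) \<in> P"
    using rest by (metis add.commute add_eq_0_iff)
  then have "u x0 *\<^sub>R x0 = 0" using pointed_cone_eq_0[OF pt x0P] by blast
  then show False using x0 T(2) S by auto
qed

lemma pointed_closed_cone_norm_bounded_functional:
  fixes P :: "'a::euclidean_space set"
  assumes cc: "convex_cone P" and cl: "closed P" and pt: "P \<inter> uminus ` P = {0}"
  obtains a b where "b > 0" "\<And>x. x \<in> P \<Longrightarrow> b * norm x \<le> inner a x"
proof -
  define C where "C = convex hull (P \<inter> sphere 0 1)"
  have "compact C"
    unfolding C_def using cl by (intro compact_convex_hull closed_Int_compact) auto
  moreover have "0 \<notin> C"
    unfolding C_def by (rule pointed_cone_zero_notin_convex_hull[OF cc pt]) auto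
  ultimately obtain a b where ab: "0 < b" "\<And>x. x \<in> C \<Longrightarrow> b < inner a x"
    using separating_hyperplane_closed_point[of C 0] unfolding C_def
    by (metis compact_imp_closed convex_convex_hull inner_zero_right)
  have "b * norm x \<le> inner a x" if x: "x \<in> P" for x
  proof (cases "x = 0")
    case False
    have "(1 / norm x) *\<^sub>R x \<in> C" unfolding C_def
      using False x by (intro hull_inc) (auto intro: convex_cone_scaleR[OF cc])
    then have "b < inner a x / norm x" using ab(2) by fastforce
    then show ?thesis using False by (simp add: field_simps)
  qed simp
  then show thesis using that ab(1) by blast
qed

lemma extreme_point_of_cone_base_extreme_vector:
  fixes P :: "'a::real_inner set"
  assumes cc: "convex_cone P" and pos: "\<And>x. x \<in> P \<Longrightarrow> x \<noteq> 0 \<Longrightarrow> 0 < inner a x"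
    and e: "e extreme_point_of (P \<inter> {x. inner a x = 1})"
  shows "extreme_vector P e"
proof -
  let ?K = "P \<inter> {x. inner a x = 1}"
  have eK: "e \<in> ?K" using e by (simp add: extreme_point_of_def)
  have "\<exists>c. y = c *\<^sub>R e" if y: "y \<in> P" and z: "z \<in> P" and yz: "y + z = e" for y z
  proof (cases "y = 0 \<or> z = 0")
    case True
    then show ?thesis
    proof
      assume "z = 0"
      then show ?thesis using yz by (intro exI[of _ 1]) simp
    qed (intro exI[of _ 0], simp)
  next
    case False
    define s where "s = inner a z"
    have ay: "inner a y = 1 - s"
      using eK yz unfolding s_def by (auto simp: inner_add_right)
    have s: "0 < s" "s < 1"
      using pos[OF y] pos[OF z] False ay unfolding s_def by auto
    define y' where "y' = (1 / (1 - s)) *\<^sub>R y"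
    define z' where "z' = (1 / s) *\<^sub>R z"
    have y'K: "y' \<in> ?K" using s y ay unfolding y'_def by (auto intro: convex_cone_scaleR[OF cc])
    have z'K: "z' \<in> ?K" using s z unfolding z'_def s_def by (auto intro: convex_cone_scaleR[OF cc])
    have e_comb: "e = (1 - s) *\<^sub>R y' + s *\<^sub>R z'"
      using s yz unfolding y'_def z'_def by simp
    have "y' = z'"
    proof (rule ccontr)
      assume "y' \<noteq> z'"
      then have "e \<in> open_segment y' z'"
        unfolding in_segment(2) using s e_comb by blast
      then show False using e y'K z'K unfolding extreme_point_of_def by blast
    qed
    then have "e = y'" using e_comb by (simp add: algebra_simps)
    then show ?thesis using s unfolding y'_def by (intro exI[of _ "1 - s"]) simp
  qed
  moreover have "e \<noteq> 0" using eK by auto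
  ultimately show ?thesis using eK unfolding extreme_vector_def by blast
qed

lemma convex_cone_eq_convex_cone_hull_base:
  fixes P :: "'a::real_inner set"
  assumes cc: "convex_cone P" and pos: "\<And>x. x \<in> P \<Longrightarrow> x \<noteq> 0 \<Longrightarrow> 0 < inner a x"
  shows "P = convex_cone hull (P \<inter> {x. inner a x = 1})"
proof
  show "P \<subseteq> convex_cone hull (P \<inter> {x. inner a x = 1})"
  proof
    fix x assume x: "x \<in> P"
    show "x \<in> convex_cone hull (P \<inter> {x. inner a x = 1})"
    proof (cases "x = 0")
      case False
      define s where "s = inner a x"
      have s: "0 < s" using pos x False unfolding s_def by blast
      have "(1 / s) *\<^sub>R x \<in> P \<inter> {x. inner a x = 1}"
        using s x unfolding s_def by (auto intro: convex_cone_scaleR[OF cc])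
      then have "s *\<^sub>R ((1 / s) *\<^sub>R x) \<in> convex_cone hull (P \<inter> {x. inner a x = 1})"
        using s by (intro convex_cone_hull_mul hull_inc) auto
      then show ?thesis using s by simp
    qed (simp add: convex_cone_hull_contains_0)
  qed
  show "convex_cone hull (P \<inter> {x. inner a x = 1}) \<subseteq> P"
    using cc by (intro hull_minimal) auto
qed

lemma closed_pointed_cone_eq_convex_cone_hull_extreme_vectors:
  fixes P :: "'a::euclidean_space set"
  assumes cc: "convex_cone P" and cl: "closed P" and pt: "P \<inter> uminus ` P = {0}"
  shows "P = convex_cone hull {e. extreme_vector P e}"
proof -
  obtain a b where b: "b > 0" and ab: "\<And>x. x \<in> P \<Longrightarrow> b * norm x \<le> inner a x"
    using pointed_closed_cone_norm_bounded_functional[OF cc cl pt] by blast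
  have pos: "0 < inner a x" if "x \<in> P" "x \<noteq> 0" for x
  proof -
    have "0 < b * norm x" using b that(2) by simp
    then show ?thesis using ab[OF that(1)] by linarith
  qed
  define K where "K = P \<inter> {x. inner a x = 1}"
  have "bounded K" unfolding bounded_iff K_def
  proof (intro exI ballI)
    fix x assume "x \<in> P \<inter> {x. inner a x = 1}"
    then have "b * norm x \<le> 1" using ab by force
    then show "norm x \<le> 1 / b" using b by (simp add: field_simps mult.commute)
  qed
  moreover have "closed K" unfolding K_def by (intro closed_Int cl closed_hyperplane)
  moreover have "convex K"
    using cc unfolding K_def convex_cone_def by (intro convex_Int convex_hyperplane) auto
  ultimately have K: "K = convex hull {x. x extreme_point_of K}"
    by (intro Krein_Milman_Minkowski) (auto simp: compact_eq_bounded_closed)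
  have ext: "{x. x extreme_point_of K} \<subseteq> {e. extreme_vector P e}"
    unfolding K_def using extreme_point_of_cone_base_extreme_vector[OF cc pos] by blast
  have "P = convex_cone hull K"
    unfolding K_def by (rule convex_cone_eq_convex_cone_hull_base[OF cc pos])
  also have "\<dots> \<subseteq> convex_cone hull {e. extreme_vector P e}"
  proof (rule hull_minimal)
    have "convex hull {x. x extreme_point_of K} \<subseteq> convex_cone hull {e. extreme_vector P e}"
      using hull_mono[OF ext] convex_hull_subset_convex_cone_hull by blast
    then show "K \<subseteq> convex_cone hull {e. extreme_vector P e}"
      by (rule ord_eq_le_trans[OF K])
  qed (rule convex_cone_convex_cone_hull)
  finally show ?thesis
    using cc by (intro subset_antisym hull_minimal) (auto simp: extreme_vector_def)
qed

lemma linear_surj_on_span_imp_inj_on: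
  fixes T :: "'a::euclidean_space \<Rightarrow> 'a"
  assumes lT: "linear T" and su: "T ` span S = span S"
  shows "inj_on T (span S)"
proof -
  obtain B where B: "B \<subseteq> span S" "independent B" "span S \<subseteq> span B" "card B = dim (span S)"
    by (rule basis_exists)
  have fB: "finite B" using independent_bound[OF B(2)] by (rule conjunct1)
  have sB: "span B = span S"
    using B(3) span_minimal[OF B(1) subspace_span] by (rule subset_antisym[rotated])
  have sTB: "span (T ` B) = span S"
    using linear_span_image[OF lT, of B] sB su by simp
  have TBsub: "T ` B \<subseteq> span S" using sTB span_superset[of "T ` B"] by simp
  have "card (T ` B) \<le> dim (span S)" using card_image_le[OF fB] B(4) by simp
  then have iTB: "independent (T ` B)"
    using card_le_dim_spanning[OF TBsub] sTB fB by simp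
  have "card (T ` B) = dim (span S)"
    using basis_card_eq_dim[OF TBsub _ iTB] sTB by simp
  then have "inj_on T B" using B(4) fB by (simp add: inj_on_iff_eq_card)
  then show ?thesis
    using linear_inj_on_span_iff_independent_image[OF lT iTB] sB by simp
qed

lemma span_eigenvectors_Int_eq_0:
  fixes f :: "'a::euclidean_space \<Rightarrow> 'a"
  assumes lf: "linear f" and A: "\<And>e. e \<in> A \<Longrightarrow> f e = l *\<^sub>R e"
    and B: "\<And>e. e \<in> B \<Longrightarrow> \<exists>c. c \<noteq> l \<and> f e = c *\<^sub>R e"
  shows "span A \<inter> span B = {0}"
proof -
  define T where "T x = f x - l *\<^sub>R x" for x
  have lT: "linear T"
    unfolding T_def linear_iff using linear_add[OF lf] linear_scale[OF lf]
    by (simp add: algebra_simps)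
  have TA: "T x = 0" if "x \<in> span A" for x
    using linear_eq_0_on_span[OF lT _ that] A unfolding T_def by simp
  have "span (T ` B) = span B"
  proof (intro span_eq[THEN iffD2] conjI subsetI)
    fix y assume "y \<in> T ` B"
    then obtain e c where "e \<in> B" "y = (c - l) *\<^sub>R e"
      using B unfolding T_def by (force simp: algebra_simps)
    then show "y \<in> span B" by (simp add: span_base span_scale)
  next
    fix e assume e: "e \<in> B"
    then obtain c where c: "c \<noteq> l" "T e = (c - l) *\<^sub>R e"
      using B unfolding T_def by (force simp: algebra_simps)
    then have "e = (1 / (c - l)) *\<^sub>R T e" by simp
    then show "e \<in> span (T ` B)" using e by (metis span_base span_scale imageI)
  qed
  then have "inj_on T (span B)"
    by (intro linear_surj_on_span_imp_inj_on lT) (simp add: linear_span_image[OF lT])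
  then have "x = 0" if "x \<in> span A" "x \<in> span B" for x
    using that TA linear_0[OF lT] span_zero unfolding inj_on_def by metis
  then show ?thesis using span_zero by blast
qed

lemma span_eq_UNIV_if_generating:
  assumes gen: "{x - y | x y. x \<in> P \<and> y \<in> P} = UNIV" and PE: "P \<subseteq> span E"
  shows "span E = UNIV"
proof -
  have "w \<in> span E" for w
  proof -
    obtain x y where "w = x - y" "x \<in> P" "y \<in> P" using gen by blast
    then show ?thesis using PE by (auto intro: span_diff)
  qed
  then show ?thesis by blast
qed

lemma ordered_direct_sum_decomp_split_generators:
  fixes P :: "'a::euclidean_space set"
  assumes ols: "ordered_linear_space P" and PE: "P = convex_cone hull E"
    and disj: "span (E \<inter> A) \<inter> span (E - A) = {0}"
  shows "ordered_direct_sum_decomp P (span (E \<inter> A)) (span (E - A))"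
proof -
  have gen: "{x - y | x y. x \<in> P \<and> y \<in> P} = UNIV"
    using ols unfolding ordered_linear_space_def by blast
  have "P \<subseteq> span E"
    unfolding PE by (intro hull_minimal span_superset convex_cone_span)
  then have "span ((E \<inter> A) \<union> (E - A)) = UNIV"
    using span_eq_UNIV_if_generating[OF gen] by (simp add: Int_Diff_Un)
  then have sum: "{x + y | x y. x \<in> span (E \<inter> A) \<and> y \<in> span (E - A)} = UNIV"
    by (simp add: span_Un)
  have hull_sub: "convex_cone hull S \<subseteq> P \<inter> span S" if "S \<subseteq> E" for S
    using that unfolding PE
    by (intro Int_greatest hull_mono hull_minimal span_superset convex_cone_span)
  have "P = convex_cone hull ((E \<inter> A) \<union> (E - A))"
    unfolding PE by (simp add: Int_Diff_Un)
  also have "\<dots> = {x + y | x y. x \<in> convex_cone hull (E \<inter> A) \<and> y \<in> convex_cone hull (E - A)}"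
    unfolding convex_cone_hull_Un by blast
  finally have "P \<subseteq> {x + y | x y. x \<in> P \<inter> span (E \<inter> A) \<and> y \<in> P \<inter> span (E - A)}"
    using hull_sub[of "E \<inter> A"] hull_sub[of "E - A"] by blast
  moreover have "convex_cone P"
    using ols unfolding ordered_linear_space_def by blast
  ultimately have "P = {x + y | x y. x \<in> P \<inter> span (E \<inter> A) \<and> y \<in> P \<inter> span (E - A)}"
    using convex_cone_add by blast
  then show ?thesis
    unfolding ordered_direct_sum_decomp_def using disj sum by (simp add: subspace_span)
qed

lemma ordered_linear_space_nonzero_element:
  fixes P :: "'a::euclidean_space set"
  assumes "ordered_linear_space P"
  obtains x where "x \<in> P" "x \<noteq> 0"
proof -
  obtain i :: 'a where i: "i \<in> Basis" using nonempty_Basis by blast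
  obtain x y where "i = x - y" "x \<in> P" "y \<in> P"
    using assms unfolding ordered_linear_space_def by blast
  then show thesis using that i nonzero_Basis by (metis diff_self)
qed

lemma irreducible_extreme_eigenvectors_imp_scalar:
  fixes P :: "'a::euclidean_space set" and f :: "'a \<Rightarrow> 'a"
  assumes ols: "ordered_linear_space P" and irr: "irreducible_ols P" and lf: "linear f"
    and eig: "\<And>e. extreme_vector P e \<Longrightarrow> \<exists>c. f e = c *\<^sub>R e"
  obtains l where "f = (\<lambda>x. l *\<^sub>R x)"
proof -
  define E where "E = {e. extreme_vector P e}"
  have PE: "P = convex_cone hull E"
    unfolding E_def using ols
    by (intro closed_pointed_cone_eq_convex_cone_hull_extreme_vectors)
       (auto simp: ordered_linear_space_def)
  have "P \<subseteq> span E"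
    unfolding PE by (intro hull_minimal span_superset convex_cone_span)
  then have spanE: "span E = UNIV"
    using ols span_eq_UNIV_if_generating unfolding ordered_linear_space_def by blast
  have Enz: "e \<noteq> 0" if "e \<in> E" for e using that unfolding E_def extreme_vector_def by blast
  have "E \<noteq> {}"
  proof
    assume "E = {}"
    then have "P = {0}" using PE by simp
    then show False using ordered_linear_space_nonzero_element[OF ols] by blast
  qed
  then obtain e0 where e0: "e0 \<in> E" by blast
  define t where "t e = (SOME c. f e = c *\<^sub>R e)" for e
  have t: "f e = t e *\<^sub>R e" if "e \<in> E" for e
    unfolding t_def using someI_ex[OF eig] that unfolding E_def by blast
  define A where "A = {e. t e = t e0}"
  have "span (E \<inter> A) \<inter> span (E - A) = {0}"
    using t unfolding A_def by (intro span_eigenvectors_Int_eq_0[OF lf]) auto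
  then have "ordered_direct_sum_decomp P (span (E \<inter> A)) (span (E - A))"
    by (rule ordered_direct_sum_decomp_split_generators[OF ols PE])
  moreover have "span (E \<inter> A) \<noteq> {0}"
    using e0 Enz[OF e0] span_base[of e0 "E \<inter> A"] unfolding A_def by auto
  ultimately have "span (E - A) = {0}"
    using irr unfolding irreducible_ols_def by blast
  have "E \<subseteq> A"
  proof
    fix e assume e: "e \<in> E"
    show "e \<in> A"
    proof (rule ccontr)
      assume "e \<notin> A"
      then have "e \<in> span (E - A)" using e by (intro span_base) blast
      then show False using \<open>span (E - A) = {0}\<close> Enz[OF e] by simp
    qed
  qed
  have "f x = t e0 *\<^sub>R x" for x
  proof (rule linear_eq_on_span[OF lf linear_scaleR])
    show "x \<in> span E" using spanE by simp
  qed (use t \<open>E \<subseteq> A\<close> in \<open>auto simp: A_def\<close>)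
  then show thesis using that by blast
qed

lemma positive_scalar_map_nonneg:
  fixes P :: "'a::euclidean_space set"
  assumes ols: "ordered_linear_space P" and pos: "positive_map P (\<lambda>x. l *\<^sub>R x)"
  shows "l \<ge> 0"
proof (rule ccontr)
  assume "\<not> l \<ge> 0"
  have cc: "convex_cone P" and pt: "P \<inter> uminus ` P = {0}"
    using ols unfolding ordered_linear_space_def by auto
  obtain x where x: "x \<in> P" "x \<noteq> 0" using ordered_linear_space_nonzero_element[OF ols] .
  have "l *\<^sub>R x \<in> P" using pos x unfolding positive_map_def by blast
  moreover have "0 \<le> - 1 / l" using \<open>\<not> l \<ge> 0\<close> by simp
  ultimately have "(- 1 / l) *\<^sub>R (l *\<^sub>R x) \<in> P"
    using convex_cone_scaleR[OF cc] by blast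
  then have "- x \<in> P" using \<open>\<not> l \<ge> 0\<close> by simp
  then show False using pointed_cone_eq_0[OF pt x(1)] x(2) by blast
qed

lemma positive_decomposition_of_id:
  fixes P :: "'a::euclidean_space set" and psi mu :: "'a \<Rightarrow> 'a"
  assumes ols: "ordered_linear_space P" and irr: "irreducible_ols P"
    and psi: "positive_map P psi" and mu: "positive_map P mu"
    and sum: "\<And>x. psi x + mu x = x"
  obtains l where "l \<ge> 0" "psi = (\<lambda>x. l *\<^sub>R x)"
proof -
  have "\<exists>c. psi e = c *\<^sub>R e" if "extreme_vector P e" for e
    using that psi mu sum[of e] unfolding extreme_vector_def positive_map_def by blast
  then obtain l where l: "psi = (\<lambda>x. l *\<^sub>R x)"
    using irreducible_extreme_eigenvectors_imp_scalar[OF ols irr] psi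
    unfolding positive_map_def by blast
  then have "l \<ge> 0" using positive_scalar_map_nonneg[OF ols] psi by blast
  then show thesis using that l by blast
qed

lemma positive_decomposition_of_order_automorphism:
  fixes P :: "'a::euclidean_space set" and chi psi mu :: "'a \<Rightarrow> 'a"
  assumes ols: "ordered_linear_space P" and irr: "irreducible_ols P"
    and chi: "order_automorphism P chi"
    and psi: "positive_map P psi" and mu: "positive_map P mu"
    and sum: "\<And>x. psi x + mu x = chi x"
  shows "\<exists>l\<ge>0. psi = (\<lambda>x. l *\<^sub>R chi x)"
proof -
  have lc: "linear chi" and bc: "bij chi" and cP: "\<And>x. chi x \<in> P \<longleftrightarrow> x \<in> P"
    using chi unfolding order_automorphism_def by auto
  define g where "g = inv chi"
  have lg: "linear g"
    unfolding g_def using inj_linear_imp_inv_linear[OF lc] bc bij_is_inj by blast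
  have cg: "chi (g y) = y" for y unfolding g_def using bc by (simp add: bij_is_surj surj_f_inv_f)
  have gc: "g (chi y) = y" for y unfolding g_def using bc by (simp add: bij_is_inj inv_f_f)
  have g_positive: "positive_map P (g \<circ> h)" if "positive_map P h" for h
    using that linear_compose[OF _ lg] cP[of "g _"] unfolding positive_map_def cg by auto
  have "(g \<circ> psi) x + (g \<circ> mu) x = x" for x
    using sum[of x] linear_add[OF lg] gc by (metis comp_apply)
  then obtain l where l: "l \<ge> 0" "g \<circ> psi = (\<lambda>x. l *\<^sub>R x)"
    using positive_decomposition_of_id[OF ols irr g_positive[OF psi] g_positive[OF mu]] by blast
  have "psi x = l *\<^sub>R chi x" for x
    using arg_cong[OF l(2), of "\<lambda>h. chi (h x)"] linear_scale[OF lc] by (simp add: cg)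
  then show ?thesis using l(1) by blast
qed

theorem theorem3p3:
  fixes P :: "'a::euclidean_space set" and chi psi mu :: "'a \<Rightarrow> 'a"
  assumes "ordered_linear_space P"
    and "irreducible_ols P"
    and "order_automorphism P chi"
    and "positive_map P psi" and "positive_map P mu"
    and "\<forall>x. chi x = psi x + mu x"
  shows "(\<exists>a\<ge>0. psi = (\<lambda>x. a *\<^sub>R chi x)) \<and> (\<exists>b\<ge>0. mu = (\<lambda>x. b *\<^sub>R chi x))"
proof
  show "\<exists>a\<ge>0. psi = (\<lambda>x. a *\<^sub>R chi x)"
    using assms(6) by (intro positive_decomposition_of_order_automorphism[OF assms(1-5)]) simp
  show "\<exists>b\<ge>0. mu = (\<lambda>x. b *\<^sub>R chi x)"
    using assms(6) by (intro positive_decomposition_of_order_automorphism[OF assms(1-3,5,4)])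
      (simp add: add.commute)
qed

end
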